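(* Let $S^\star\subseteq S$. Then $S^\star$ generates $\mathcal{J}$ (as a two-sided ideal of $\mathcal{A}$) if and only if for every upper prime $U$ and every lower prime $D$ there exist words $U'\sim U$ and $D'\sim D$ such that either $U'D'-D'U'\in S^\star$ or $D'U'-U'D'\in S^\star$.
   Context: $\mathcal{A}$ is the free associative $\mathbb{C}$-algebra on noncommuting generators $L,R$; words are finite products of these letters. A word is balanced if it contains equally many $L$'s and $R$'s. $S=\{FG-GF : F,G \text{ nonempty balanced words}\}$ and $\mathcal{J}$ is the two-sided ideal generated by $S$. For words $X,Y$, $X\sim Y$ means $X-Y\in\mathcal{J}$. A word is prime if it is nonempty, balanced, and cannot be written as a product of two nonempty balanced words. For a balanced word $W=a_1\cdots a_n$, $e_k(W)=\sum_{i=1}^k\overline{a_i}$ ($0\le k\le n$) with $\overline{R}=1$, $\overline{L}=-1$. A prime $P$ of length $n$ is an upper prime if $e_k(P)>0$ for $1\le k\le n-1$, and a lower prime if $e_k(P)<0$ for $1\le k\le n-1$. *)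

theory Defs
  imports Complex_Main "HOL-Library.Poly_Mapping"
begin

datatype letter = L | R

type_synonym word = "letter list"

text \<open>The free associative C-algebra A on L, R: finitely supported
  C-valued functions on words (formal linear combinations of words).\<close>
type_synonym alg = "word \<Rightarrow>\<^sub>0 complex"

definition wd :: "word \<Rightarrow> alg" where
  "wd w = Poly_Mapping.single w 1"

definition amult :: "alg \<Rightarrow> alg \<Rightarrow> alg" where
  "amult f g = (\<Sum>u\<in>Poly_Mapping.keys f. \<Sum>v\<in>Poly_Mapping.keys g.
                   Poly_Mapping.single (u @ v) (Poly_Mapping.lookup f u * Poly_Mapping.lookup g v))"

inductive_set ideal_gen :: "alg set \<Rightarrow> alg set" for T :: "alg set" where
  gen: "t \<in> T \<Longrightarrow> t \<in> ideal_gen T"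
| zero: "0 \<in> ideal_gen T"
| add: "a \<in> ideal_gen T \<Longrightarrow> b \<in> ideal_gen T \<Longrightarrow> a + b \<in> ideal_gen T"
| lmult: "a \<in> ideal_gen T \<Longrightarrow> amult x a \<in> ideal_gen T"
| rmult: "a \<in> ideal_gen T \<Longrightarrow> amult a x \<in> ideal_gen T"

definition balanced :: "word \<Rightarrow> bool" where
  "balanced w \<longleftrightarrow> count_list w L = count_list w R"

definition S :: "alg set" where
  "S = {wd (F @ G) - wd (G @ F) | F G.
          F \<noteq> [] \<and> G \<noteq> [] \<and> balanced F \<and> balanced G}"

definition J :: "alg set" where
  "J = ideal_gen S"

definition wsim :: "word \<Rightarrow> word \<Rightarrow> bool" (infix "\<sim>\<^sub>J" 50) where
  "X \<sim>\<^sub>J Y \<longleftrightarrow> wd X - wd Y \<in> J"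

definition is_prime_word :: "word \<Rightarrow> bool" where
  "is_prime_word P \<longleftrightarrow> P \<noteq> [] \<and> balanced P \<and>
     \<not> (\<exists>A B. A \<noteq> [] \<and> B \<noteq> [] \<and> balanced A \<and> balanced B \<and> P = A @ B)"

definition lval :: "letter \<Rightarrow> int" where
  "lval a = (case a of R \<Rightarrow> 1 | L \<Rightarrow> -1)"

definition e :: "nat \<Rightarrow> word \<Rightarrow> int" where
  "e k W = (\<Sum>i<k. lval (W ! i))"

definition upper_prime :: "word \<Rightarrow> bool" where
  "upper_prime P \<longleftrightarrow> is_prime_word P \<and>
     (\<forall>k. 1 \<le> k \<and> k \<le> length P - 1 \<longrightarrow> e k P > 0)"

definition lower_prime :: "word \<Rightarrow> bool" where
  "lower_prime P \<longleftrightarrow> is_prime_word P \<and>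
     (\<forall>k. 1 \<le> k \<and> k \<le> length P - 1 \<longrightarrow> e k P < 0)"

end

theory Submission
  imports Defs "HOL-Library.Multiset"
begin

text \<open>
  Write \<open>\<approx>\<close> for congruence modulo the ideal generated by \<open>S\<^sup>*\<close>. If a set \<open>C\<close> of words
  satisfies \<open>aFGb \<in> C \<longleftrightarrow> aGFb \<in> C\<close> whenever \<open>FG - GF\<close> is a generator, then the sum of the
  coefficients on \<open>C\<close> is a linear functional vanishing on the ideal, so \<open>C\<close> is a union of
  classes of \<open>\<approx>\<close>. Swapping adjacent balanced factors permutes the heights \<open>e\<^sub>k\<close>, hence the
  classes of \<open>\<sim>\<^sub>J\<close> preserve being an upper or a lower prime.

  Necessity: if no commutator of representatives of \<open>U\<close> and \<open>D\<close> lies in \<open>S\<^sup>*\<close>, the words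
  \<open>U'D'\<close> with \<open>U' \<sim>\<^sub>J U\<close>, \<open>D' \<sim>\<^sub>J D\<close> form such a set \<open>C\<close>: a product \<open>FG\<close> of balanced factors
  of \<open>U'D'\<close> lies inside \<open>U'\<close> or inside \<open>D'\<close> unless \<open>F = U'\<close> and \<open>G = D'\<close>. It contains \<open>UD\<close> but not
  \<open>DU\<close>, which starts with \<open>L\<close>, although \<open>UD \<approx> DU\<close>.

  Sufficiency: \<open>FG \<approx> GF\<close> for balanced \<open>F\<close>, \<open>G\<close> by induction on the length of \<open>FG\<close>. Factors
  that are not prime are split; two primes of the same kind have the shapes \<open>cXd\<close>, \<open>cYd\<close>
  with \<open>X\<close>, \<open>Y\<close> balanced and are swapped by shorter commutations; for an upper and a lower
  prime the hypothesis applies, since on shorter words \<open>\<sim>\<^sub>J\<close> implies \<open>\<approx>\<close> by the first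
  paragraph and the induction hypothesis.
\<close>

text \<open>Concatenation makes words a monoid, so the library's convolution product on
  finitely supported functions is the multiplication of the free algebra.\<close>

instantiation list :: (type) monoid_add
begin
definition zero_list :: "'a list" where "zero_list = []"
definition plus_list :: "'a list \<Rightarrow> 'a list \<Rightarrow> 'a list" where "plus_list xs ys = xs @ ys"
instance by standard (simp_all add: zero_list_def plus_list_def)
end

lemma poly_mapping_sum_single:
  "(f :: 'a \<Rightarrow>\<^sub>0 'b::comm_monoid_add) =
     (\<Sum>u\<in>Poly_Mapping.keys f. Poly_Mapping.single u (Poly_Mapping.lookup f u))"
proof (rule poly_mapping_eqI)
  fix w
  show "Poly_Mapping.lookup f w =
      Poly_Mapping.lookup (\<Sum>u\<in>Poly_Mapping.keys f. Poly_Mapping.single u (Poly_Mapping.lookup f u)) w"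
    by (cases "w \<in> Poly_Mapping.keys f") (auto simp: lookup_sum lookup_single when_def in_keys_iff)
qed

lemma amult_eq_times: "amult f g = f * g"
proof -
  have "f * g = (\<Sum>u\<in>Poly_Mapping.keys f. Poly_Mapping.single u (Poly_Mapping.lookup f u)) *
      (\<Sum>v\<in>Poly_Mapping.keys g. Poly_Mapping.single v (Poly_Mapping.lookup g v))"
    by (simp flip: poly_mapping_sum_single)
  also have "\<dots> = amult f g"
    unfolding amult_def sum_distrib_left sum_distrib_right
    by (simp add: mult_single plus_list_def) (rule sum.swap)
  finally show ?thesis by simp
qed

lemma wd_append: "wd (x @ y) = wd x * wd y"
  by (simp add: wd_def mult_single plus_list_def)

subsection \<open>Ideals and the induced equivalence on words\<close>

lemma ideal_gen_mult: "a \<in> ideal_gen T \<Longrightarrow> x * a * y \<in> ideal_gen T"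
  by (metis amult_eq_times ideal_gen.lmult ideal_gen.rmult)

lemma ideal_gen_uminus: "a \<in> ideal_gen T \<Longrightarrow> - a \<in> ideal_gen T"
  using ideal_gen_mult[of a T "-1" 1] by simp

lemma ideal_gen_subset:
  assumes "T \<subseteq> ideal_gen T'"
  shows "ideal_gen T \<subseteq> ideal_gen T'"
proof
  show "a \<in> ideal_gen T'" if "a \<in> ideal_gen T" for a
    using that by induction (use assms in \<open>auto intro: ideal_gen.intros\<close>)
qed

definition ideal_equiv :: "alg set \<Rightarrow> word \<Rightarrow> word \<Rightarrow> bool" where
  "ideal_equiv T X Y \<longleftrightarrow> wd X - wd Y \<in> ideal_gen T"

lemma wsim_iff_ideal_equiv: "X \<sim>\<^sub>J Y \<longleftrightarrow> ideal_equiv S X Y"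
  by (simp add: wsim_def ideal_equiv_def J_def)

lemma ideal_equiv_refl: "ideal_equiv T X X"
  by (simp add: ideal_equiv_def ideal_gen.zero)

lemma ideal_equiv_sym: "ideal_equiv T X Y \<Longrightarrow> ideal_equiv T Y X"
  unfolding ideal_equiv_def using ideal_gen_uminus by fastforce

lemma ideal_equiv_trans [trans]: "ideal_equiv T X Y \<Longrightarrow> ideal_equiv T Y Z \<Longrightarrow> ideal_equiv T X Z"
  unfolding ideal_equiv_def using ideal_gen.add by fastforce

lemma ideal_equiv_context: "ideal_equiv T X Y \<Longrightarrow> ideal_equiv T (a @ X @ b) (a @ Y @ b)"
  unfolding ideal_equiv_def using ideal_gen_mult[of "wd X - wd Y" T "wd a" "wd b"]
  by (simp add: wd_append algebra_simps)

lemma ideal_equiv_append: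
  "ideal_equiv T X X' \<Longrightarrow> ideal_equiv T Y Y' \<Longrightarrow> ideal_equiv T (X @ Y) (X' @ Y')"
  using ideal_equiv_context[of T X X' "[]" Y] ideal_equiv_context[of T Y Y' X' "[]"]
    ideal_equiv_trans by fastforce

lemma ideal_equiv_gen: "wd X - wd Y \<in> T \<Longrightarrow> ideal_equiv T X Y"
  by (simp add: ideal_equiv_def ideal_gen.gen)

lemma wsim_refl: "X \<sim>\<^sub>J X"
  by (simp add: wsim_iff_ideal_equiv ideal_equiv_refl)

lemma wsim_sym: "X \<sim>\<^sub>J Y \<Longrightarrow> Y \<sim>\<^sub>J X"
  unfolding wsim_iff_ideal_equiv by (rule ideal_equiv_sym)

lemma wsim_trans: "X \<sim>\<^sub>J Y \<Longrightarrow> Y \<sim>\<^sub>J Z \<Longrightarrow> X \<sim>\<^sub>J Z"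
  unfolding wsim_iff_ideal_equiv by (rule ideal_equiv_trans)

lemma ideal_equiv_S_swap: "balanced F \<Longrightarrow> balanced G \<Longrightarrow> ideal_equiv S (F @ G) (G @ F)"
proof (cases "F = [] \<or> G = []")
  case False
  then show "balanced F \<Longrightarrow> balanced G \<Longrightarrow> ?thesis"
    by (intro ideal_equiv_gen) (auto simp: S_def)
qed (auto simp: ideal_equiv_refl)

subsection \<open>Coefficient sums as invariants of the ideal\<close>

definition coeff_sum :: "word set \<Rightarrow> alg \<Rightarrow> complex" where
  "coeff_sum C f = (\<Sum>w\<in>Poly_Mapping.keys f \<inter> C. Poly_Mapping.lookup f w)"

lemma coeff_sum_superset:
  assumes "finite A" "Poly_Mapping.keys f \<subseteq> A"
  shows "coeff_sum C f = (\<Sum>w\<in>A \<inter> C. Poly_Mapping.lookup f w)"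
  unfolding coeff_sum_def
  by (rule sum.mono_neutral_left) (use assms in \<open>auto simp: in_keys_iff\<close>)

lemma coeff_sum_add: "coeff_sum C (f + g) = coeff_sum C f + coeff_sum C g"
proof -
  let ?A = "Poly_Mapping.keys f \<union> Poly_Mapping.keys g"
  have "finite ?A" "Poly_Mapping.keys (f + g) \<subseteq> ?A"
    using keys_add[of f g] by auto
  then show ?thesis
    by (simp add: coeff_sum_superset[of ?A] lookup_add sum.distrib)
qed

lemma coeff_sum_zero [simp]: "coeff_sum C 0 = 0"
  by (simp add: coeff_sum_def)

lemma coeff_sum_diff: "coeff_sum C (f - g) = coeff_sum C f - coeff_sum C g"
  by (metis coeff_sum_add eq_diff_eq)

lemma coeff_sum_sum: "coeff_sum C (\<Sum>a\<in>A. h a) = (\<Sum>a\<in>A. coeff_sum C (h a))"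
  by (induction A rule: infinite_finite_induct) (auto simp: coeff_sum_add)

lemma coeff_sum_single: "coeff_sum C (Poly_Mapping.single w c) = (if w \<in> C then c else 0)"
  by (simp add: coeff_sum_def)

lemma coeff_sum_wd: "coeff_sum C (wd w) = (if w \<in> C then 1 else 0)"
  by (simp add: wd_def coeff_sum_single)

definition swap_invariant :: "alg set \<Rightarrow> word set \<Rightarrow> bool" where
  "swap_invariant T C \<longleftrightarrow> (\<forall>F G a b. F \<noteq> [] \<longrightarrow> G \<noteq> [] \<longrightarrow> balanced F \<longrightarrow> balanced G \<longrightarrow>
     wd (F @ G) - wd (G @ F) \<in> T \<longrightarrow> (a @ F @ G @ b \<in> C \<longleftrightarrow> a @ G @ F @ b \<in> C))"

lemma coeff_sum_swap_multiple:
  assumes "\<And>a b. a @ F @ G @ b \<in> C \<longleftrightarrow> a @ G @ F @ b \<in> C"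
  shows "coeff_sum C (x * (wd (F @ G) - wd (G @ F)) * y) = 0"
proof -
  let ?t = "wd (F @ G) - wd (G @ F)"
  have single: "coeff_sum C (Poly_Mapping.single u c * ?t * Poly_Mapping.single v d) = 0"
    for u v c d
  proof -
    have "Poly_Mapping.single u c * ?t * Poly_Mapping.single v d =
        Poly_Mapping.single (u @ F @ G @ v) (c * d) - Poly_Mapping.single (u @ G @ F @ v) (c * d)"
      by (simp add: wd_def mult_single plus_list_def right_diff_distrib left_diff_distrib)
    then show ?thesis
      using assms[of u v] by (simp add: coeff_sum_diff coeff_sum_single)
  qed
  have "x * ?t * y =
      (\<Sum>u\<in>Poly_Mapping.keys x. Poly_Mapping.single u (Poly_Mapping.lookup x u)) * ?t *
      (\<Sum>v\<in>Poly_Mapping.keys y. Poly_Mapping.single v (Poly_Mapping.lookup y v))"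
    by (simp flip: poly_mapping_sum_single)
  also have "\<dots> = (\<Sum>u\<in>Poly_Mapping.keys x. \<Sum>v\<in>Poly_Mapping.keys y.
      Poly_Mapping.single u (Poly_Mapping.lookup x u) * ?t * Poly_Mapping.single v (Poly_Mapping.lookup y v))"
    unfolding sum_distrib_left sum_distrib_right by (rule sum.swap)
  finally show ?thesis
    by (simp add: coeff_sum_sum single)
qed

lemma coeff_sum_ideal_gen:
  assumes "T \<subseteq> S" "swap_invariant T C" "f \<in> ideal_gen T"
  shows "coeff_sum C (x * f * y) = 0"
  using assms(3)
proof (induction arbitrary: x y)
  case (gen t)
  then obtain F G where "t = wd (F @ G) - wd (G @ F)" "F \<noteq> []" "G \<noteq> []" "balanced F" "balanced G"
    using assms(1) unfolding S_def by blast
  with gen assms(2) show ?case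
    unfolding swap_invariant_def by (metis coeff_sum_swap_multiple)
next
  case (add a b)
  then show ?case by (simp add: algebra_simps coeff_sum_add)
next
  case (lmult a z)
  then show ?case using lmult.IH[of "x * z" y] by (simp add: amult_eq_times mult.assoc)
next
  case (rmult a z)
  then show ?case using rmult.IH[of x "z * y"] by (simp add: amult_eq_times mult.assoc)
qed simp

lemma ideal_equiv_mem_iff:
  assumes "T \<subseteq> S" "swap_invariant T C" "ideal_equiv T X Y"
  shows "X \<in> C \<longleftrightarrow> Y \<in> C"
proof -
  have "coeff_sum C (1 * (wd X - wd Y) * 1) = 0"
    using coeff_sum_ideal_gen assms unfolding ideal_equiv_def by blast
  then show ?thesis
    by (simp add: coeff_sum_diff coeff_sum_wd split: if_splits)
qed

subsection \<open>Heights of words\<close>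

text \<open>A total version of \<open>e\<close>, which reads letters with \<open>!\<close> and is unspecified beyond the
  end of the word.\<close>

definition height :: "nat \<Rightarrow> word \<Rightarrow> int" where
  "height k w = sum_list (map lval (take k w))"

lemma height_append [simp]: "height k (x @ y) = height k x + height (k - length x) y"
  by (simp add: height_def)

lemma height_0 [simp]: "height 0 w = 0"
  by (simp add: height_def)

lemma height_Suc_Cons [simp]: "height (Suc k) (c # w) = lval c + height k w"
  by (simp add: height_def)

lemma height_ge_length: "length w \<le> k \<Longrightarrow> height k w = height (length w) w"
  by (simp add: height_def)

lemma height_Suc: "k < length w \<Longrightarrow> height (Suc k) w = height k w + lval (w ! k)"
  by (simp add: height_def take_Suc_conv_app_nth)

lemma e_eq_height: "k \<le> length w \<Longrightarrow> e k w = height k w"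
  by (induction k) (auto simp: e_def height_Suc)

lemma lval_simps [simp]: "lval R = 1" "lval L = -1"
  by (simp_all add: lval_def)

lemma abs_lval [simp]: "\<bar>lval c\<bar> = 1"
  by (cases c) (simp_all add: lval_def)

lemma balanced_iff_height: "balanced w \<longleftrightarrow> height (length w) w = 0"
proof -
  have "sum_list (map lval w) = int (count_list w R) - int (count_list w L)"
    by (induction w) (auto simp: lval_def split: letter.splits)
  then show ?thesis
    by (auto simp: balanced_def height_def)
qed

lemma balanced_swap: "balanced (a @ F @ G @ b) \<longleftrightarrow> balanced (a @ G @ F @ b)"
  by (simp add: balanced_def add_ac)

definition heights :: "word \<Rightarrow> int list" where
  "heights w = map (\<lambda>k. height (Suc k) w) [0..<length w]"

lemma length_heights [simp]: "length (heights w) = length w"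
  by (simp add: heights_def)

lemma nth_heights: "i < length w \<Longrightarrow> heights w ! i = height (Suc i) w"
  by (simp add: heights_def)

lemma heights_append: "heights (x @ y) = heights x @ map ((+) (height (length x) x)) (heights y)"
proof (rule nth_equalityI)
  fix i assume "i < length (heights (x @ y))"
  then show "heights (x @ y) ! i = (heights x @ map ((+) (height (length x) x)) (heights y)) ! i"
    using height_ge_length[of x "Suc i"]
    by (cases "i < length x") (simp_all add: nth_heights nth_append Suc_diff_le)
qed simp

lemma mset_heights_swap:
  assumes "balanced F" "balanced G"
  shows "mset (heights (a @ F @ G @ b)) = mset (heights (a @ G @ F @ b))"
  using assms by (simp add: heights_append balanced_iff_height o_def)

subsection \<open>Upper and lower primes\<close>

lemma balanced_split_iff_height:
  assumes "balanced P"
  shows "(\<exists>A B. A \<noteq> [] \<and> B \<noteq> [] \<and> balanced A \<and> balanced B \<and> P = A @ B) \<longleftrightarrow>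
    (\<exists>k. 0 < k \<and> k < length P \<and> height k P = 0)"
proof
  assume "\<exists>A B. A \<noteq> [] \<and> B \<noteq> [] \<and> balanced A \<and> balanced B \<and> P = A @ B"
  then obtain A B where "A \<noteq> []" "B \<noteq> []" "balanced A" "P = A @ B"
    by blast
  then show "\<exists>k. 0 < k \<and> k < length P \<and> height k P = 0"
    by (intro exI[of _ "length A"]) (simp add: balanced_iff_height)
next
  assume "\<exists>k. 0 < k \<and> k < length P \<and> height k P = 0"
  then obtain k where k: "0 < k" "k < length P" "height k P = 0"
    by blast
  have "sum_list (map lval P) = sum_list (map lval (take k P)) + sum_list (map lval (drop k P))"
    by (metis append_take_drop_id map_append sum_list_append)
  with k assms have "balanced (take k P)" "balanced (drop k P)"
    by (simp_all add: balanced_iff_height height_def min_def)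
  with k show "\<exists>A B. A \<noteq> [] \<and> B \<noteq> [] \<and> balanced A \<and> balanced B \<and> P = A @ B"
    by (intro exI[of _ "take k P"] exI[of _ "drop k P"]) auto
qed

lemma is_prime_word_iff_height:
  "is_prime_word P \<longleftrightarrow>
     P \<noteq> [] \<and> balanced P \<and> (\<forall>k. 0 < k \<and> k < length P \<longrightarrow> height k P \<noteq> 0)"
  unfolding is_prime_word_def using balanced_split_iff_height by blast

lemma interior_e_iff_height:
  "(\<forall>k. 1 \<le> k \<and> k \<le> length P - 1 \<longrightarrow> Q (e k P)) \<longleftrightarrow>
     (\<forall>k. 0 < k \<and> k < length P \<longrightarrow> Q (height k P))"
proof -
  have "1 \<le> k \<and> k \<le> length P - 1 \<longleftrightarrow> 0 < k \<and> k < length P" for k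
    by auto
  then show ?thesis
    by (auto simp: e_eq_height)
qed

lemma upper_prime_iff_height:
  "upper_prime P \<longleftrightarrow>
     P \<noteq> [] \<and> balanced P \<and> (\<forall>k. 0 < k \<and> k < length P \<longrightarrow> 0 < height k P)"
  using interior_e_iff_height[of P "(<) 0"]
  unfolding upper_prime_def is_prime_word_iff_height by auto

lemma lower_prime_iff_height:
  "lower_prime P \<longleftrightarrow>
     P \<noteq> [] \<and> balanced P \<and> (\<forall>k. 0 < k \<and> k < length P \<longrightarrow> height k P < 0)"
  using interior_e_iff_height[of P "\<lambda>h. h < 0"]
  unfolding lower_prime_def is_prime_word_iff_height by auto

lemma interior_height_sign:
  assumes nz: "\<forall>k. 0 < k \<and> k < length P \<longrightarrow> height k P \<noteq> 0" and k: "0 < k" "k < length P"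
  shows "0 < height k P \<longleftrightarrow> 0 < height 1 P"
proof -
  have up: "\<forall>i. 1 \<le> i \<and> i < k \<longrightarrow> \<bar>height (Suc i) P - height i P\<bar> \<le> 1"
    using k by (simp add: height_Suc)
  then have down: "\<forall>i. 1 \<le> i \<and> i < k \<longrightarrow> \<bar>- height (Suc i) P - - height i P\<bar> \<le> 1"
    by (simp add: abs_minus_commute)
  have no_zero: "\<not> (1 \<le> i \<and> i \<le> k \<and> height i P = 0)" for i
    using nz k by auto
  have "1 \<le> k"
    using k by simp
  have "\<not> (height 1 P \<le> 0 \<and> 0 \<le> height k P)"
    using nat_intermed_int_val[OF up \<open>1 \<le> k\<close>] no_zero by blast
  moreover have "\<not> (height k P \<le> 0 \<and> 0 \<le> height 1 P)"
    using nat_intermed_int_val[OF down \<open>1 \<le> k\<close>, of 0] no_zero by auto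
  moreover have "height 1 P \<noteq> 0"
    using nz k by simp
  ultimately show ?thesis
    by linarith
qed

lemma prime_upper_or_lower: "is_prime_word P \<Longrightarrow> upper_prime P \<or> lower_prime P"
  unfolding is_prime_word_iff_height upper_prime_iff_height lower_prime_iff_height
  using interior_height_sign[of P] by (metis linorder_neqE_linordered_idom)

lemma balanced_Cons_snoc:
  assumes "P \<noteq> []" "balanced P"
  obtains c X d where "P = c # X @ [d]" "lval c + height (length X) X + lval d = 0"
proof -
  obtain c P' where P: "P = c # P'"
    using assms(1) by (cases P) auto
  with assms(2) have "P' \<noteq> []"
    by (cases c) (auto simp: balanced_def)
  then obtain X d where "P' = X @ [d]"
    by (cases P' rule: rev_exhaust) auto
  with P assms(2) show thesis
    using that by (simp add: balanced_iff_height height_def)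
qed

lemma upper_prime_shape:
  assumes "upper_prime P"
  obtains X where "P = R # X @ [L]" "balanced X"
proof -
  from assms have ne: "P \<noteq> []" and bal: "balanced P"
    and pos: "\<forall>k. 0 < k \<and> k < length P \<longrightarrow> 0 < height k P"
    by (simp_all add: upper_prime_iff_height)
  then obtain c X d where P: "P = c # X @ [d]" "lval c + height (length X) X + lval d = 0"
    using balanced_Cons_snoc[OF ne bal] by blast
  moreover have "0 < height 1 P" "0 < height (Suc (length X)) P"
    using pos P by auto
  ultimately have "c = R" "d = L" "height (length X) X = 0"
    by (cases c; cases d; simp)+
  then show thesis
    by (intro that) (simp_all add: P(1) balanced_iff_height)
qed

lemma lower_prime_shape:
  assumes "lower_prime P"
  obtains X where "P = L # X @ [R]" "balanced X"
proof -
  from assms have ne: "P \<noteq> []" and bal: "balanced P"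
    and neg: "\<forall>k. 0 < k \<and> k < length P \<longrightarrow> height k P < 0"
    by (simp_all add: lower_prime_iff_height)
  then obtain c X d where P: "P = c # X @ [d]" "lval c + height (length X) X + lval d = 0"
    using balanced_Cons_snoc[OF ne bal] by blast
  moreover have "height 1 P < 0" "height (Suc (length X)) P < 0"
    using neg P by auto
  ultimately have "c = L" "d = R" "height (length X) X = 0"
    by (cases c; cases d; simp)+
  then show thesis
    by (intro that) (simp_all add: P(1) balanced_iff_height)
qed

lemma interior_heights_iff_mset:
  assumes "balanced w" "\<not> Q 0"
  shows "w \<noteq> [] \<and> (\<forall>k. 0 < k \<and> k < length w \<longrightarrow> Q (height k w)) \<longleftrightarrow>
    count (mset (heights w)) 0 = 1 \<and> (\<forall>h \<in># mset (heights w). h \<noteq> 0 \<longrightarrow> Q h)"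
proof (cases "w = []")
  case False
  then have "[0..<length w] = [0..<length w - 1] @ [length w - 1]"
    by (cases "length w") simp_all
  with False assms(1) have hs: "heights w = map (\<lambda>k. height (Suc k) w) [0..<length w - 1] @ [0]"
    by (simp add: heights_def balanced_iff_height)
  have reindex: "(\<forall>k. 0 < k \<and> k < length w \<longrightarrow> Q (height k w)) \<longleftrightarrow>
      (\<forall>k < length w - 1. Q (height (Suc k) w))"
    by (metis less_diff_conv gr0_conv_Suc Suc_eq_plus1 zero_less_Suc)
  show ?thesis
    unfolding hs reindex using False assms(2) by (auto simp: count_eq_zero_iff) (metis atLeastLessThan_iff image_eqI zero_le)
qed (simp add: heights_def)

lemma upper_prime_swap:
  assumes "balanced F" "balanced G"
  shows "upper_prime (a @ F @ G @ b) \<longleftrightarrow> upper_prime (a @ G @ F @ b)"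
  using interior_heights_iff_mset[of "a @ F @ G @ b" "(<) 0"]
    interior_heights_iff_mset[of "a @ G @ F @ b" "(<) 0"]
    mset_heights_swap[OF assms, of a b] balanced_swap[of a F G b]
  unfolding upper_prime_iff_height by auto

lemma lower_prime_swap:
  assumes "balanced F" "balanced G"
  shows "lower_prime (a @ F @ G @ b) \<longleftrightarrow> lower_prime (a @ G @ F @ b)"
  using interior_heights_iff_mset[of "a @ F @ G @ b" "\<lambda>h. h < 0"]
    interior_heights_iff_mset[of "a @ G @ F @ b" "\<lambda>h. h < 0"]
    mset_heights_swap[OF assms, of a b] balanced_swap[of a F G b]
  unfolding lower_prime_iff_height by auto

lemma upper_prime_wsim: "X \<sim>\<^sub>J Y \<Longrightarrow> upper_prime X \<longleftrightarrow> upper_prime Y"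
  using ideal_equiv_mem_iff[of S "Collect upper_prime"] upper_prime_swap
  unfolding wsim_iff_ideal_equiv swap_invariant_def by auto

lemma lower_prime_wsim: "X \<sim>\<^sub>J Y \<Longrightarrow> lower_prime X \<longleftrightarrow> lower_prime Y"
  using ideal_equiv_mem_iff[of S "Collect lower_prime"] lower_prime_swap
  unfolding wsim_iff_ideal_equiv swap_invariant_def by auto

subsection \<open>Balanced factors of a product of an upper and a lower prime\<close>

lemma height_skip_balanced:
  "balanced F \<Longrightarrow> height (length x + length F) (x @ F @ y) = height (length x) (x @ F @ y)"
  by (simp add: height_def balanced_iff_height)

lemma upper_prime_height:
  assumes "upper_prime U" "k \<le> length U"
  shows "0 \<le> height k U" and "height k U = 0 \<longleftrightarrow> k = 0 \<or> k = length U"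
proof -
  from assms(1) have bal: "balanced U" and pos: "\<And>k. 0 < k \<Longrightarrow> k < length U \<Longrightarrow> 0 < height k U"
    by (simp_all add: upper_prime_iff_height)
  have "k = 0 \<or> k = length U \<or> 0 < k \<and> k < length U"
    using assms(2) by auto
  then show "0 \<le> height k U" "height k U = 0 \<longleftrightarrow> k = 0 \<or> k = length U"
    using bal pos[of k] by (auto simp: balanced_iff_height)
qed

lemma lower_prime_height:
  assumes "lower_prime D" "k \<le> length D"
  shows "height k D \<le> 0" and "height k D = 0 \<longleftrightarrow> k = 0 \<or> k = length D"
proof -
  from assms(1) have bal: "balanced D" and neg: "\<And>k. 0 < k \<Longrightarrow> k < length D \<Longrightarrow> height k D < 0"
    by (simp_all add: lower_prime_iff_height)
  have "k = 0 \<or> k = length D \<or> 0 < k \<and> k < length D"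
    using assms(2) by auto
  then show "height k D \<le> 0" "height k D = 0 \<longleftrightarrow> k = 0 \<or> k = length D"
    using bal neg[of k] by (auto simp: balanced_iff_height)
qed

lemma height_upper_append_lower:
  assumes "upper_prime U" "lower_prime D" "k \<le> length (U @ D)"
  shows "k \<le> length U \<Longrightarrow> 0 \<le> height k (U @ D)"
    and "length U \<le> k \<Longrightarrow> height k (U @ D) \<le> 0"
    and "height k (U @ D) = 0 \<longleftrightarrow> k = 0 \<or> k = length U \<or> k = length (U @ D)"
proof -
  have U0: "height (length U) U = 0"
    using upper_prime_height(2)[OF assms(1)] by simp
  have left: "height k (U @ D) = height k U" if "k \<le> length U"
    using that by simp
  have right: "height k (U @ D) = height (k - length U) D" if "length U \<le> k"
    using that U0 height_ge_length[of U k] by simp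
  show "k \<le> length U \<Longrightarrow> 0 \<le> height k (U @ D)"
    using left upper_prime_height(1)[OF assms(1)] by simp
  show "length U \<le> k \<Longrightarrow> height k (U @ D) \<le> 0"
    using right lower_prime_height(1)[OF assms(2)] assms(3) by simp
  show "height k (U @ D) = 0 \<longleftrightarrow> k = 0 \<or> k = length U \<or> k = length (U @ D)"
  proof (cases "k \<le> length U")
    case True
    then show ?thesis
      using left upper_prime_height(2)[OF assms(1)] by auto
  next
    case False
    then show ?thesis
      using right lower_prime_height(2)[OF assms(2), of "k - length U"] assms(3) by auto
  qed
qed

lemma balanced_factors_in_upper_append_lower:
  assumes w: "a @ F @ G @ b = U @ D" and UD: "upper_prime U" "lower_prime D"
    and F: "F \<noteq> []" "balanced F" and G: "G \<noteq> []" "balanced G"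
  shows "length (a @ F @ G) \<le> length U \<or> length U \<le> length a \<or> a = [] \<and> F = U \<and> G = D \<and> b = []"
proof (rule ccontr)
  assume not_inside: "\<not> ?thesis"
  then have straddle: "length a < length U" "length U < length (a @ F @ G)"
    by auto
  let ?h = "\<lambda>k. height k (U @ D)"
  define p q r where "p = length a" and "q = length (a @ F)" and "r = length (a @ F @ G)"
  have "?h q = ?h p" "?h r = ?h q"
    using height_skip_balanced[OF F(2), of a "G @ b"] height_skip_balanced[OF G(2), of "a @ F" b]
    unfolding w[symmetric] p_def q_def r_def by (simp_all add: add.assoc)
  have r_le: "r \<le> length (U @ D)"
    using arg_cong[OF w, of length] by (simp add: r_def)
  have "?h p = 0"
    using height_upper_append_lower(1)[OF UD, of p] height_upper_append_lower(2)[OF UD, of r]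
      \<open>?h q = ?h p\<close> \<open>?h r = ?h q\<close> straddle r_le by (simp add: p_def r_def)
  then have zero: "?h p = 0" "?h q = 0" "?h r = 0"
    using \<open>?h q = ?h p\<close> \<open>?h r = ?h q\<close> by simp_all
  have "p \<le> length (U @ D)" "q \<le> length (U @ D)"
    using r_le by (simp_all add: p_def q_def r_def)
  then have "p = 0" "r = length (U @ D)" "q = length U"
    using zero height_upper_append_lower(3)[OF UD] r_le straddle F(1) G(1)
    by (auto simp: p_def q_def r_def simp del: height_append)
  then have "a = []" "b = []" "length F = length U" "F @ G = U @ D"
    using arg_cong[OF w, of length] w by (auto simp: p_def q_def r_def)
  then show False
    using not_inside by simp
qed

lemma swap_in_upper_append_lower:
  assumes w: "a @ F @ G @ b = U @ D" and UD: "upper_prime U" "lower_prime D"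
    and F: "F \<noteq> []" "balanced F" and G: "G \<noteq> []" "balanced G"
    and not_UD: "\<not> (F = U \<and> G = D)"
  shows "\<exists>U' D'. a @ G @ F @ b = U' @ D' \<and> U' \<sim>\<^sub>J U \<and> D' \<sim>\<^sub>J D"
proof -
  have swap: "ideal_equiv S (x @ G @ F @ y) (x @ F @ G @ y)" for x y
    using ideal_equiv_context[OF ideal_equiv_sym[OF ideal_equiv_S_swap[OF F(2) G(2)]]] by simp
  consider (in_U) "length (a @ F @ G) \<le> length U" | (in_D) "length U \<le> length a"
    using balanced_factors_in_upper_append_lower[OF w UD F G] not_UD by blast
  then show ?thesis
  proof cases
    case in_U
    with w have "a @ F @ G = take (length (a @ F @ G)) U" "b = drop (length (a @ F @ G)) U @ D"
      using append_eq_append_conv_if[of "a @ F @ G" b U D] by simp_all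
    then obtain b' where U: "U = a @ F @ G @ b'" and b: "b = b' @ D"
      by (metis append.assoc append_take_drop_id)
    moreover have "a @ G @ F @ b' \<sim>\<^sub>J U"
      using swap[of a b'] U by (simp add: wsim_iff_ideal_equiv)
    ultimately show ?thesis
      using wsim_refl[of D] by (intro exI[of _ "a @ G @ F @ b'"] exI[of _ D]) simp
  next
    case in_D
    with w have "U = take (length U) a" "D = drop (length U) a @ F @ G @ b"
      using append_eq_append_conv_if[of U D a "F @ G @ b"] by simp_all
    then obtain a' where a: "a = U @ a'" and D: "D = a' @ F @ G @ b"
      by (metis append_take_drop_id)
    moreover have "a' @ G @ F @ b \<sim>\<^sub>J D"
      using swap[of a' b] D by (simp add: wsim_iff_ideal_equiv)
    ultimately show ?thesis
      using wsim_refl[of U] by (intro exI[of _ U] exI[of _ "a' @ G @ F @ b"]) simp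
  qed
qed

definition commutator_in :: "alg set \<Rightarrow> word \<Rightarrow> word \<Rightarrow> bool" where
  "commutator_in T U D \<longleftrightarrow> (\<exists>U' D'. U' \<sim>\<^sub>J U \<and> D' \<sim>\<^sub>J D \<and>
      (wd (U' @ D') - wd (D' @ U') \<in> T \<or> wd (D' @ U') - wd (U' @ D') \<in> T))"

lemma commutator_in_if_ideal_gen_eq_J:
  assumes sub: "Sstar \<subseteq> S" and eq: "ideal_gen Sstar = J"
    and UD: "upper_prime U" "lower_prime D"
  shows "commutator_in Sstar U D"
proof (rule ccontr)
  assume no_pair: "\<not> ?thesis"
  define C where "C = {U' @ D' | U' D'. U' \<sim>\<^sub>J U \<and> D' \<sim>\<^sub>J D}"
  have closed: "a @ G @ F @ b \<in> C"
    if mem: "a @ F @ G @ b \<in> C" and F: "F \<noteq> []" "balanced F" and G: "G \<noteq> []" "balanced G"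
      and gen: "wd (F @ G) - wd (G @ F) \<in> Sstar \<or> wd (G @ F) - wd (F @ G) \<in> Sstar" for F G a b
  proof -
    from mem obtain U' D' where w: "a @ F @ G @ b = U' @ D'" "U' \<sim>\<^sub>J U" "D' \<sim>\<^sub>J D"
      by (auto simp: C_def)
    have "upper_prime U'" "lower_prime D'"
      using w(2,3) UD upper_prime_wsim lower_prime_wsim by blast+
    moreover have "\<not> (F = U' \<and> G = D')"
      using no_pair w(2,3) gen unfolding commutator_in_def by blast
    ultimately obtain U'' D'' where "a @ G @ F @ b = U'' @ D''" "U'' \<sim>\<^sub>J U'" "D'' \<sim>\<^sub>J D'"
      using swap_in_upper_append_lower[OF w(1) _ _ F G] by blast
    then show ?thesis
      using w(2,3) wsim_trans unfolding C_def by blast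
  qed
  have "swap_invariant Sstar C"
    unfolding swap_invariant_def using closed by (metis (no_types, lifting))
  moreover have "ideal_equiv Sstar (U @ D) (D @ U)"
    using ideal_equiv_S_swap UD eq by (simp add: upper_prime_iff_height lower_prime_iff_height ideal_equiv_def J_def)
  moreover have "U @ D \<in> C"
    using wsim_refl unfolding C_def by blast
  ultimately have "D @ U \<in> C"
    using ideal_equiv_mem_iff[OF sub] by blast
  then obtain U' D' where "D @ U = U' @ D'" "U' \<sim>\<^sub>J U"
    by (auto simp: C_def)
  moreover obtain X where "U' = R # X @ [L]"
    using upper_prime_shape upper_prime_wsim \<open>U' \<sim>\<^sub>J U\<close> UD(1) by metis
  moreover obtain Y where "D = L # Y @ [R]"
    using lower_prime_shape[OF UD(2)] by metis
  ultimately show False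
    by simp
qed

lemma ideal_equiv_if_wsim:
  assumes short: "\<And>F G. balanced F \<Longrightarrow> balanced G \<Longrightarrow> length F + length G \<le> length X \<Longrightarrow>
      ideal_equiv T (F @ G) (G @ F)"
    and "X \<sim>\<^sub>J Y"
  shows "ideal_equiv T X Y"
proof -
  define C where "C = {w. length w = length X \<and> ideal_equiv T X w}"
  have "ideal_equiv T (a @ F @ G @ b) (a @ G @ F @ b)"
    if "balanced F" "balanced G" "length (a @ F @ G @ b) = length X" for F G a b
    using ideal_equiv_context[OF short] that by simp
  then have "swap_invariant S C"
    unfolding swap_invariant_def C_def by (auto intro: ideal_equiv_trans ideal_equiv_sym)
  moreover have "X \<in> C"
    by (simp add: C_def ideal_equiv_refl)
  ultimately show ?thesis
    using ideal_equiv_mem_iff[of S C X Y] \<open>X \<sim>\<^sub>J Y\<close> by (simp add: wsim_iff_ideal_equiv C_def)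
qed

lemma ideal_equiv_swap_append:
  assumes "ideal_equiv T (A @ G) (G @ A)" "ideal_equiv T (B @ G) (G @ B)"
  shows "ideal_equiv T ((A @ B) @ G) (G @ A @ B)"
  using ideal_equiv_context[OF assms(2), of A "[]"] ideal_equiv_context[OF assms(1), of "[]" B]
  by (auto intro: ideal_equiv_trans)

lemma ideal_equiv_swap_same_ends:
  assumes "ideal_equiv T (X @ [d, c]) ([d, c] @ X)" "ideal_equiv T (Y @ [d, c]) ([d, c] @ Y)"
    and "ideal_equiv T (X @ Y) (Y @ X)"
  shows "ideal_equiv T ((c # X @ [d]) @ c # Y @ [d]) ((c # Y @ [d]) @ c # X @ [d])"
proof -
  have "ideal_equiv T ((c # X @ [d]) @ c # Y @ [d]) ([c, d, c] @ X @ Y @ [d])"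
    using ideal_equiv_context[OF assms(1), of "[c]" "Y @ [d]"] by simp
  also have "ideal_equiv T \<dots> ([c, d, c] @ Y @ X @ [d])"
    using ideal_equiv_context[OF assms(3), of "[c, d, c]" "[d]"] by simp
  also have "ideal_equiv T \<dots> ((c # Y @ [d]) @ c # X @ [d])"
    using ideal_equiv_sym[OF ideal_equiv_context[OF assms(2), of "[c]" "X @ [d]"]] by simp
  finally show ?thesis .
qed

lemma ideal_equiv_swap_upper_lower:
  assumes short: "\<And>F G. balanced F \<Longrightarrow> balanced G \<Longrightarrow> length F + length G < length U + length D \<Longrightarrow>
      ideal_equiv T (F @ G) (G @ F)"
    and UD: "upper_prime U" "lower_prime D"
    and pair: "commutator_in T U D"
  shows "ideal_equiv T (U @ D) (D @ U)"
proof -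
  obtain U' D' where U': "U' \<sim>\<^sub>J U" and D': "D' \<sim>\<^sub>J D"
    and gen: "ideal_equiv T (U' @ D') (D' @ U')"
    using pair ideal_equiv_gen ideal_equiv_sym unfolding commutator_in_def by metis
  have "0 < length U" "0 < length D"
    using UD by (simp_all add: upper_prime_iff_height lower_prime_iff_height)
  have UU': "ideal_equiv T U U'"
  proof (rule ideal_equiv_if_wsim)
    show "ideal_equiv T (F @ G) (G @ F)"
      if "balanced F" "balanced G" "length F + length G \<le> length U" for F G
      using short[OF that(1,2)] that(3) \<open>0 < length D\<close> by simp
  qed (rule wsim_sym[OF U'])
  moreover have DD': "ideal_equiv T D D'"
  proof (rule ideal_equiv_if_wsim)
    show "ideal_equiv T (F @ G) (G @ F)"
      if "balanced F" "balanced G" "length F + length G \<le> length D" for F G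
      using short[OF that(1,2)] that(3) \<open>0 < length U\<close> by simp
  qed (rule wsim_sym[OF D'])
  ultimately have "ideal_equiv T (U @ D) (U' @ D')"
    by (rule ideal_equiv_append)
  also note gen
  also have "ideal_equiv T (D' @ U') (D @ U)"
    using ideal_equiv_append[OF DD' UU'] by (rule ideal_equiv_sym)
  finally show ?thesis .
qed

lemma ideal_equiv_swap_if_commutator_in:
  assumes pairs: "\<And>U D. upper_prime U \<Longrightarrow> lower_prime D \<Longrightarrow> commutator_in T U D"
    and "balanced F" "balanced G"
  shows "ideal_equiv T (F @ G) (G @ F)"
  using assms(2,3)
proof (induction "length F + length G" arbitrary: F G rule: less_induct)
  case less
  have IH: "ideal_equiv T (F' @ G') (G' @ F')"
    if "balanced F'" "balanced G'" "length F' + length G' < length F + length G" for F' G'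
    using less.hyps that by blast
  have same_ends: "ideal_equiv T (F @ G) (G @ F)"
    if "F = c # X @ [d]" "G = c # Y @ [d]" "balanced X" "balanced Y" "balanced [d, c]" for c d X Y
  proof -
    have "ideal_equiv T (X @ [d, c]) ([d, c] @ X)" "ideal_equiv T (Y @ [d, c]) ([d, c] @ Y)"
      "ideal_equiv T (X @ Y) (Y @ X)"
      using IH[of X "[d, c]"] IH[of Y "[d, c]"] IH[of X Y] that by simp_all
    then show ?thesis
      using ideal_equiv_swap_same_ends that(1,2) by simp
  qed
  consider (trivial) "F = [] \<or> G = []"
    | (split_F) A B where "A \<noteq> []" "B \<noteq> []" "balanced A" "balanced B" "F = A @ B"
    | (split_G) A B where "A \<noteq> []" "B \<noteq> []" "balanced A" "balanced B" "G = A @ B"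
    | (primes) "is_prime_word F" "is_prime_word G"
    using less.prems unfolding is_prime_word_def by blast
  then show ?case
  proof cases
    case trivial
    then show ?thesis
      by (auto simp: ideal_equiv_refl)
  next
    case split_F
    then show ?thesis
      using ideal_equiv_swap_append[of T A G B] IH less.prems by simp
  next
    case split_G
    then show ?thesis
      using ideal_equiv_swap_append[of T A F B] IH less.prems by (simp add: ideal_equiv_sym)
  next
    case primes
    then consider "upper_prime F" "upper_prime G" | "lower_prime F" "lower_prime G"
      | "upper_prime F" "lower_prime G" | "lower_prime F" "upper_prime G"
      using prime_upper_or_lower by blast
    then show ?thesis
    proof cases
      case 1
      obtain X Y where "F = R # X @ [L]" "G = R # Y @ [L]" "balanced X" "balanced Y"
        using upper_prime_shape[OF 1(1)] upper_prime_shape[OF 1(2)] by metis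
      then show ?thesis
        using same_ends by (simp add: balanced_def)
    next
      case 2
      obtain X Y where "F = L # X @ [R]" "G = L # Y @ [R]" "balanced X" "balanced Y"
        using lower_prime_shape[OF 2(1)] lower_prime_shape[OF 2(2)] by metis
      then show ?thesis
        using same_ends by (simp add: balanced_def)
    next
      case 3
      with pairs show ?thesis
        by (intro ideal_equiv_swap_upper_lower[OF IH]) blast+
    next
      case 4
      have "ideal_equiv T (G @ F) (F @ G)"
      proof (rule ideal_equiv_swap_upper_lower)
        show "ideal_equiv T (F' @ G') (G' @ F')"
          if "balanced F'" "balanced G'" "length F' + length G' < length G + length F" for F' G'
          using IH that by simp
      qed (use 4 pairs in blast)+
      then show ?thesis
        by (rule ideal_equiv_sym)
    qed
  qed
qed

lemma ideal_gen_eq_J_if_commutator_in: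
  assumes sub: "Sstar \<subseteq> S"
    and pairs: "\<And>U D. upper_prime U \<Longrightarrow> lower_prime D \<Longrightarrow> commutator_in Sstar U D"
  shows "ideal_gen Sstar = J"
proof
  show "ideal_gen Sstar \<subseteq> J"
    unfolding J_def by (rule ideal_gen_subset) (use sub ideal_gen.gen in blast)
  have "S \<subseteq> ideal_gen Sstar"
    using ideal_equiv_swap_if_commutator_in[OF pairs] by (auto simp: S_def ideal_equiv_def)
  then show "J \<subseteq> ideal_gen Sstar"
    unfolding J_def by (rule ideal_gen_subset)
qed

theorem proposition5p7:
  fixes Sstar :: "alg set"
  assumes "Sstar \<subseteq> S"
  shows "ideal_gen Sstar = J \<longleftrightarrow>
    (\<forall>U D. upper_prime U \<longrightarrow> lower_prime D \<longrightarrow>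
      (\<exists>U' D'. U' \<sim>\<^sub>J U \<and> D' \<sim>\<^sub>J D \<and>
         (wd (U' @ D') - wd (D' @ U') \<in> Sstar \<or> wd (D' @ U') - wd (U' @ D') \<in> Sstar)))"
proof -
  have "ideal_gen Sstar = J \<longleftrightarrow>
      (\<forall>U D. upper_prime U \<longrightarrow> lower_prime D \<longrightarrow> commutator_in Sstar U D)"
    using commutator_in_if_ideal_gen_eq_J[OF assms] ideal_gen_eq_J_if_commutator_in[OF assms]
    by blast
  then show ?thesis
    unfolding commutator_in_def .
qed

end
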